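(* Let $\varepsilon\in(0,2)$. For all sufficiently large $n$ (depending on $\varepsilon$) there exists an approximately convex set $A\subseteq\ell_1^n$ such that $$\mathcal{H}(A,\operatorname{Co}(A))\ge\log_2 n-\varepsilon\qquad\text{and}\qquad\operatorname{diam}(A)\le\Bigl(\frac{8}{\varepsilon}+1\Bigr)\log_2 n.$$
   Context: $\ell_1^n$ is $\mathbb{R}^n$ with the norm $\sum|a_i|$. A set $A$ is approximately convex if $d(tx+(1-t)y,A)\le1$ for all $x,y\in A$, $t\in[0,1]$, where $d(x,A)=\inf_{a\in A}\|x-a\|$. $\mathcal{H}$ is the Hausdorff distance, $\operatorname{Co}$ the convex hull, $\operatorname{diam}(A)=\sup\{\|x-y\|:x,y\in A\}$. *)

theory Defs
  imports "HOL-Analysis.Analysis"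
begin

text \<open>Points of \<open>\<ell>_1^n\<close> are represented as functions \<open>nat \<Rightarrow> real\<close> vanishing outside \<open>{..<n}\<close>.\<close>

definition l1space :: "nat \<Rightarrow> (nat \<Rightarrow> real) set" where
  "l1space n = {x. \<forall>i\<ge>n. x i = 0}"

definition l1norm :: "nat \<Rightarrow> (nat \<Rightarrow> real) \<Rightarrow> real" where
  "l1norm n x = (\<Sum>i<n. \<bar>x i\<bar>)"

definition l1dist :: "nat \<Rightarrow> (nat \<Rightarrow> real) \<Rightarrow> (nat \<Rightarrow> real) \<Rightarrow> real" where
  "l1dist n x y = l1norm n (\<lambda>i. x i - y i)"

definition l1setdist :: "nat \<Rightarrow> (nat \<Rightarrow> real) \<Rightarrow> (nat \<Rightarrow> real) set \<Rightarrow> real" where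
  "l1setdist n x A = Inf ((\<lambda>a. l1dist n x a) ` A)"

definition approx_convex :: "nat \<Rightarrow> (nat \<Rightarrow> real) set \<Rightarrow> bool" where
  "approx_convex n A \<longleftrightarrow>
     (\<forall>x\<in>A. \<forall>y\<in>A. \<forall>t::real. 0 \<le> t \<and> t \<le> 1 \<longrightarrow>
        l1setdist n (\<lambda>i. t * x i + (1 - t) * y i) A \<le> 1)"

definition Co :: "(nat \<Rightarrow> real) set \<Rightarrow> (nat \<Rightarrow> real) set" where
  "Co A = {x. \<exists>(k::nat) (c::nat \<Rightarrow> real) (p::nat \<Rightarrow> nat \<Rightarrow> real).
              (\<forall>i<k. 0 \<le> c i \<and> p i \<in> A) \<and> (\<Sum>i<k. c i) = 1 \<and>
              x = (\<lambda>j. \<Sum>i<k. c i * p i j)}"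

definition hausd :: "nat \<Rightarrow> (nat \<Rightarrow> real) set \<Rightarrow> (nat \<Rightarrow> real) set \<Rightarrow> real" where
  "hausd n A B = max (Sup ((\<lambda>a. l1setdist n a B) ` A)) (Sup ((\<lambda>b. l1setdist n b A) ` B))"

definition l1diam :: "nat \<Rightarrow> (nat \<Rightarrow> real) set \<Rightarrow> real" where
  "l1diam n A = Sup {l1dist n x y | x y. x \<in> A \<and> y \<in> A}"

end

theory Submission
  imports Defs "HOL-Real_Asymp.Real_Asymp"
begin

text \<open>
  Place \<open>R\<close> times the probability simplex on \<open>m\<close> points in the first \<open>m\<close> coordinates of
  \<open>\<ell>_1^(m+1)\<close> and lift the point \<open>R p\<close> to height \<open>H(p)\<close>, the Shannon entropy of \<open>p\<close> in bits.
  Entropy is concave, and mixing two distributions raises it by at most one bit (the binary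
  entropy of the weights), so every chord of this graph stays within distance 1 of the graph:
  the set is approximately convex, and its diameter is at most \<open>2R + log\<^sub>2 m\<close>.
  The vertices \<open>R e\<^sub>i\<close> have height 0, so the barycentre \<open>w = (R/m, \<dots>, R/m, 0)\<close> lies in the
  convex hull; its distance to the point over \<open>R p\<close> is \<open>R \<parallel>p - u\<parallel>\<^sub>1 + H(p)\<close> with \<open>u\<close> uniform.
  The stability estimate \<open>ln m - H(p) \<le> (2 ln m + 2) \<parallel>p - u\<parallel>\<^sub>1\<close> makes this at least
  \<open>log\<^sub>2 m\<close> once \<open>R \<ge> 2 log\<^sub>2 m + 3\<close>. Take \<open>m = n - 1\<close> and \<open>R = 2 log\<^sub>2 m + 3\<close>.
\<close>

lemma gibbs_pointwise:
  fixes a c :: real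
  assumes "0 \<le> a" "0 < c"
  shows "a - c \<le> a * ln a - a * ln c"
proof (cases "a = 0")
  case False
  then have "0 < a" using assms by simp
  have "ln c - ln a = ln (c / a)" using \<open>0 < a\<close> assms by (simp add: ln_div)
  also have "\<dots> \<le> c / a - 1" using \<open>0 < a\<close> assms by (intro ln_le_minus_one) simp
  finally have "a * (ln c - ln a) \<le> a * (c / a - 1)" using \<open>0 < a\<close> by (intro mult_left_mono) auto
  then show ?thesis using \<open>0 < a\<close> by (simp add: algebra_simps)
qed (use assms in simp)

lemma xlnx_convex:
  fixes t a b :: real
  assumes "0 \<le> t" "t \<le> 1" "0 \<le> a" "0 \<le> b"
  shows "(t * a + (1 - t) * b) * ln (t * a + (1 - t) * b) \<le> t * (a * ln a) + (1 - t) * (b * ln b)"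
    (is "?c * ln ?c \<le> _")
proof (cases "?c = 0")
  case True
  then have "t * a = 0" "(1 - t) * b = 0" using assms by (simp_all add: add_nonneg_eq_0_iff)
  then show ?thesis using True by (metis mult.assoc mult_zero_left order_refl)
next
  case False
  then have "0 < ?c" using assms by (simp add: order_less_le)
  have "t * (a - ?c) \<le> t * (a * ln a - a * ln ?c)"
    using gibbs_pointwise[OF _ \<open>0 < ?c\<close>] assms by (intro mult_left_mono) auto
  moreover have "(1 - t) * (b - ?c) \<le> (1 - t) * (b * ln b - b * ln ?c)"
    using gibbs_pointwise[OF _ \<open>0 < ?c\<close>] assms by (intro mult_left_mono) auto
  ultimately show ?thesis by (simp add: algebra_simps)
qed

lemma xlnx_superadditive:
  fixes a b :: real
  assumes "0 \<le> a" "0 \<le> b"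
  shows "a * ln a + b * ln b \<le> (a + b) * ln (a + b)"
proof -
  have "x * ln x \<le> x * ln (a + b)" if "0 \<le> x" "x \<le> a + b" for x
    using that by (cases "x = 0") (auto intro: mult_left_mono)
  from this[of a] this[of b] show ?thesis using assms by (simp add: algebra_simps)
qed

lemma xlnx_mult:
  fixes s t :: real
  assumes "0 \<le> s" "0 \<le> t"
  shows "(t * s) * ln (t * s) = t * (s * ln s) + s * (t * ln t)"
  using assms by (cases "t = 0 \<or> s = 0") (auto simp: ln_mult algebra_simps)

lemma binary_entropy_le_ln2:
  fixes t :: real
  assumes "0 \<le> t" "t \<le> 1"
  shows "- (t * ln t) - (1 - t) * ln (1 - t) \<le> ln 2"
  using gibbs_pointwise[of t "1/2"] gibbs_pointwise[of "1 - t" "1/2"] assms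
  by (simp add: ln_div algebra_simps)

definition prob_simplex :: "'a set \<Rightarrow> ('a \<Rightarrow> real) set" where
  "prob_simplex I = {p. (\<forall>i\<in>I. 0 \<le> p i) \<and> (\<Sum>i\<in>I. p i) = 1}"

definition shannon_entropy :: "'a set \<Rightarrow> ('a \<Rightarrow> real) \<Rightarrow> real" where
  "shannon_entropy I p = - (\<Sum>i\<in>I. p i * ln (p i))"

lemma prob_simplex_le_one:
  assumes "finite I" "p \<in> prob_simplex I" "i \<in> I"
  shows "p i \<le> 1"
  using assms member_le_sum[of i I p] by (auto simp: prob_simplex_def)

lemma prob_simplex_index_nonempty:
  assumes "p \<in> prob_simplex I"
  shows "I \<noteq> {}"
  using assms by (auto simp: prob_simplex_def)

lemma prob_simplex_mix:
  assumes "p \<in> prob_simplex I" "q \<in> prob_simplex I" "0 \<le> t" "t \<le> 1"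
  shows "(\<lambda>i. t * p i + (1 - t) * q i) \<in> prob_simplex I"
  using assms by (auto simp: prob_simplex_def sum.distrib sum_distrib_left[symmetric])

lemma shannon_entropy_nonneg:
  assumes "finite I" "p \<in> prob_simplex I"
  shows "0 \<le> shannon_entropy I p"
proof -
  have "p i * ln (p i) \<le> 0" if "i \<in> I" for i
    using that assms prob_simplex_le_one[OF assms]
    by (cases "p i = 0") (auto simp: prob_simplex_def mult_nonneg_nonpos)
  then show ?thesis unfolding shannon_entropy_def by (simp add: sum_nonpos)
qed

lemma shannon_entropy_le_ln_card:
  assumes "finite I" "p \<in> prob_simplex I"
  shows "shannon_entropy I p \<le> ln (card I)"
proof -
  have "I \<noteq> {}" using prob_simplex_index_nonempty[OF assms(2)] .
  then have "0 < 1 / real (card I)" using assms(1) by (simp add: card_gt_0_iff)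
  then have "(\<Sum>i\<in>I. p i - 1 / card I) \<le> (\<Sum>i\<in>I. p i * ln (p i) - p i * ln (1 / card I))"
    using gibbs_pointwise assms(2) by (intro sum_mono) (auto simp: prob_simplex_def)
  moreover have "(\<Sum>i\<in>I. p i - 1 / card I) = 0"
    using assms \<open>I \<noteq> {}\<close> by (simp add: sum_subtractf prob_simplex_def)
  moreover have "(\<Sum>i\<in>I. p i * ln (p i) - p i * ln (1 / card I))
                   = ln (card I) - shannon_entropy I p"
    using assms \<open>I \<noteq> {}\<close>
    by (simp add: shannon_entropy_def sum_subtractf sum.distrib sum_distrib_right[symmetric]
        prob_simplex_def ln_div)
  ultimately show ?thesis by linarith
qed

lemma shannon_entropy_concave:
  assumes "p \<in> prob_simplex I" "q \<in> prob_simplex I" "0 \<le> t" "t \<le> 1"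
  shows "t * shannon_entropy I p + (1 - t) * shannon_entropy I q
           \<le> shannon_entropy I (\<lambda>i. t * p i + (1 - t) * q i)"
proof -
  have "(\<Sum>i\<in>I. (t * p i + (1 - t) * q i) * ln (t * p i + (1 - t) * q i))
          \<le> (\<Sum>i\<in>I. t * (p i * ln (p i)) + (1 - t) * (q i * ln (q i)))"
    using assms by (intro sum_mono xlnx_convex) (auto simp: prob_simplex_def)
  then show ?thesis
    by (simp add: shannon_entropy_def sum.distrib sum_distrib_left)
qed

lemma shannon_entropy_mix_le:
  assumes "p \<in> prob_simplex I" "q \<in> prob_simplex I" "0 \<le> t" "t \<le> 1"
  shows "shannon_entropy I (\<lambda>i. t * p i + (1 - t) * q i)
           \<le> t * shannon_entropy I p + (1 - t) * shannon_entropy I q + ln 2"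
proof -
  have "(\<Sum>i\<in>I. t * (p i * ln (p i)) + (1 - t) * (q i * ln (q i))
                  + p i * (t * ln t) + q i * ((1 - t) * ln (1 - t)))
          \<le> (\<Sum>i\<in>I. (t * p i + (1 - t) * q i) * ln (t * p i + (1 - t) * q i))"
  proof (intro sum_mono)
    fix i assume "i \<in> I"
    then have "0 \<le> p i" "0 \<le> q i" using assms by (auto simp: prob_simplex_def)
    then show "t * (p i * ln (p i)) + (1 - t) * (q i * ln (q i))
                 + p i * (t * ln t) + q i * ((1 - t) * ln (1 - t))
               \<le> (t * p i + (1 - t) * q i) * ln (t * p i + (1 - t) * q i)"
      using xlnx_superadditive[of "t * p i" "(1 - t) * q i"] xlnx_mult[of "p i" t]
        xlnx_mult[of "q i" "1 - t"] assms by simp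
  qed
  also have "\<dots> = - shannon_entropy I (\<lambda>i. t * p i + (1 - t) * q i)"
    by (simp add: shannon_entropy_def)
  finally show ?thesis
    using binary_entropy_le_ln2[OF assms(3,4)] assms
    by (simp add: shannon_entropy_def prob_simplex_def sum.distrib sum_distrib_left
        sum_distrib_right[symmetric])
qed

lemma mult_ln_scaled_le_abs_diff:
  fixes m p :: real
  assumes "1 \<le> m" "0 \<le> p" "p \<le> 1"
  shows "p * ln (m * p) \<le> (2 * ln m + 2) * \<bar>p - 1 / m\<bar>"
proof -
  have "0 \<le> ln m" using assms by simp
  consider "m * p \<le> 1" | "1 < m * p" "m * p \<le> 2" | "2 < m * p" by linarith
  then show ?thesis
  proof cases
    case 1
    then have "p * ln (m * p) \<le> 0"
      using assms by (cases "p = 0") (auto simp: mult_nonneg_nonpos)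
    then show ?thesis using \<open>0 \<le> ln m\<close> by (smt (verit) abs_ge_zero mult_nonneg_nonneg)
  next
    case 2
    then have "0 < p" using assms by (cases "p = 0") auto
    have "1 / m < p" using 2 assms by (simp add: field_simps)
    have "p * ln (m * p) \<le> p * (m * p - 1)"
      using 2 \<open>0 < p\<close> by (intro mult_left_mono ln_le_minus_one) auto
    also have "\<dots> = (m * p) * (p - 1 / m)" using assms by (simp add: field_simps)
    also have "\<dots> \<le> 2 * (p - 1 / m)" using 2 \<open>1 / m < p\<close> by (intro mult_right_mono) auto
    also have "\<dots> \<le> (2 * ln m + 2) * (p - 1 / m)"
      using \<open>0 \<le> ln m\<close> \<open>1 / m < p\<close> by (intro mult_right_mono) auto
    finally show ?thesis using \<open>1 / m < p\<close> by simp
  next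
    case 3
    then have "0 < p" using assms by (cases "p = 0") auto
    have "1 / m < p" "p \<le> 2 * (p - 1 / m)" using 3 assms by (simp_all add: field_simps)
    have "p * ln (m * p) \<le> p * ln m"
      using assms \<open>0 < p\<close> by (intro mult_left_mono) (auto intro: mult_left_le)
    also have "\<dots> \<le> 2 * (p - 1 / m) * ln m"
      using \<open>p \<le> 2 * (p - 1 / m)\<close> \<open>0 \<le> ln m\<close> by (intro mult_right_mono)
    also have "\<dots> \<le> (2 * ln m + 2) * (p - 1 / m)"
      using \<open>1 / m < p\<close> by (simp add: algebra_simps)
    finally show ?thesis using \<open>1 / m < p\<close> by simp
  qed
qed

lemma ln_card_minus_shannon_entropy_le:
  assumes "finite I" "p \<in> prob_simplex I"
  shows "ln (card I) - shannon_entropy I p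
           \<le> (2 * ln (card I) + 2) * (\<Sum>i\<in>I. \<bar>p i - 1 / card I\<bar>)"
proof -
  have "I \<noteq> {}" using prob_simplex_index_nonempty[OF assms(2)] .
  then have "1 \<le> card I" using assms(1) by (simp add: Suc_le_eq card_gt_0_iff)
  have "p i * ln (card I * p i) = p i * ln (card I) + p i * ln (p i)" if "i \<in> I" for i
    using that assms(2) \<open>1 \<le> card I\<close>
    by (cases "p i = 0") (auto simp: ln_mult algebra_simps prob_simplex_def)
  then have "(\<Sum>i\<in>I. p i * ln (card I * p i))
               = (\<Sum>i\<in>I. p i) * ln (card I) + (\<Sum>i\<in>I. p i * ln (p i))"
    by (simp add: sum.distrib sum_distrib_right)
  then have "ln (card I) - shannon_entropy I p = (\<Sum>i\<in>I. p i * ln (card I * p i))"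
    using assms(2) by (simp add: shannon_entropy_def prob_simplex_def)
  also have "\<dots> \<le> (\<Sum>i\<in>I. (2 * ln (card I) + 2) * \<bar>p i - 1 / card I\<bar>)"
    using assms \<open>1 \<le> card I\<close> prob_simplex_le_one[OF assms]
    by (intro sum_mono mult_ln_scaled_le_abs_diff) (auto simp: prob_simplex_def)
  finally show ?thesis by (simp add: sum_distrib_left)
qed

lemma l1dist_nonneg: "0 \<le> l1dist n x y"
  unfolding l1dist_def l1norm_def by (intro sum_nonneg) auto

lemma l1dist_Suc: "l1dist (Suc m) x y = (\<Sum>i<m. \<bar>x i - y i\<bar>) + \<bar>x m - y m\<bar>"
  by (simp add: l1dist_def l1norm_def)

lemma l1dist_le_l1norm_add: "l1dist n x y \<le> l1norm n x + l1norm n y"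
  unfolding l1dist_def l1norm_def sum.distrib[symmetric]
  by (intro sum_mono) (simp add: abs_triangle_ineq4)

lemma l1setdist_le: "a \<in> A \<Longrightarrow> l1setdist n x A \<le> l1dist n x a"
  unfolding l1setdist_def
  by (rule cInf_lower) (auto intro: bdd_belowI[where m = 0] simp: l1dist_nonneg)

lemma l1setdist_ge:
  assumes "A \<noteq> {}" "\<And>a. a \<in> A \<Longrightarrow> d \<le> l1dist n x a"
  shows "d \<le> l1setdist n x A"
  unfolding l1setdist_def using assms by (intro cInf_greatest) auto

lemma l1diam_le:
  assumes "A \<noteq> {}" "\<And>x y. x \<in> A \<Longrightarrow> y \<in> A \<Longrightarrow> l1dist n x y \<le> d"
  shows "l1diam n A \<le> d"
  unfolding l1diam_def using assms by (intro cSup_least) blast+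

lemma l1norm_Co_le:
  assumes "\<And>a. a \<in> A \<Longrightarrow> l1norm n a \<le> B" "b \<in> Co A"
  shows "l1norm n b \<le> B"
proof -
  obtain k c p where cp: "\<forall>i<(k::nat). 0 \<le> c i \<and> p i \<in> A" "(\<Sum>i<k. c i) = 1"
    and b: "b = (\<lambda>j. \<Sum>i<k. c i * p i j)"
    using assms(2) unfolding Co_def by blast
  have "l1norm n b \<le> (\<Sum>j<n. \<Sum>i<k. c i * \<bar>p i j\<bar>)"
    unfolding l1norm_def b
  proof (intro sum_mono)
    fix j
    have "\<bar>\<Sum>i<k. c i * p i j\<bar> \<le> (\<Sum>i<k. \<bar>c i * p i j\<bar>)" by (rule sum_abs)
    also have "\<dots> = (\<Sum>i<k. c i * \<bar>p i j\<bar>)" using cp by (intro sum.cong) (auto simp: abs_mult)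
    finally show "\<bar>\<Sum>i<k. c i * p i j\<bar> \<le> (\<Sum>i<k. c i * \<bar>p i j\<bar>)" .
  qed
  also have "\<dots> = (\<Sum>i<k. c i * l1norm n (p i))"
    by (subst sum.swap) (simp add: l1norm_def sum_distrib_left)
  also have "\<dots> \<le> (\<Sum>i<k. c i * B)" using cp assms(1) by (intro sum_mono mult_left_mono) auto
  also have "\<dots> = B" using cp by (simp add: sum_distrib_right[symmetric])
  finally show ?thesis .
qed

lemma l1setdist_le_hausd_Co:
  assumes "a \<in> A" "\<And>a. a \<in> A \<Longrightarrow> l1norm n a \<le> B" "b \<in> Co A"
  shows "l1setdist n b A \<le> hausd n A (Co A)"
proof -
  have "bdd_above ((\<lambda>b. l1setdist n b A) ` Co A)"
  proof (rule bdd_aboveI2)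
    fix b assume "b \<in> Co A"
    have "l1setdist n b A \<le> l1dist n b a" using assms(1) by (rule l1setdist_le)
    also have "\<dots> \<le> l1norm n b + l1norm n a" by (rule l1dist_le_l1norm_add)
    also have "\<dots> \<le> B + B" using l1norm_Co_le[OF assms(2) \<open>b \<in> Co A\<close>] assms(1,2) by (intro add_mono)
    finally show "l1setdist n b A \<le> B + B" .
  qed
  then have "l1setdist n b A \<le> Sup ((\<lambda>b. l1setdist n b A) ` Co A)"
    using assms(3) by (intro cSup_upper) auto
  then show ?thesis unfolding hausd_def by linarith
qed

definition entropy_point :: "nat \<Rightarrow> real \<Rightarrow> (nat \<Rightarrow> real) \<Rightarrow> nat \<Rightarrow> real" where
  "entropy_point m R p j =
     (if j < m then R * p j else if j = m then shannon_entropy {..<m} p / ln 2 else 0)"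

definition entropy_graph :: "nat \<Rightarrow> real \<Rightarrow> (nat \<Rightarrow> real) set" where
  "entropy_graph m R = entropy_point m R ` prob_simplex {..<m}"

lemma entropy_graph_subset_l1space: "entropy_graph m R \<subseteq> l1space (Suc m)"
  by (auto simp: entropy_graph_def entropy_point_def l1space_def)

lemma shannon_entropy_bits_bounds:
  fixes m :: nat
  assumes "p \<in> prob_simplex {..<m}"
  shows "0 \<le> shannon_entropy {..<m} p / ln 2" "shannon_entropy {..<m} p / ln 2 \<le> log 2 m"
  using shannon_entropy_nonneg[OF finite_lessThan assms]
    shannon_entropy_le_ln_card[OF finite_lessThan assms]
  by (simp_all add: log_def divide_right_mono)

lemma vertex_in_entropy_graph:
  assumes "i < m"
  shows "(\<lambda>j. if j = i then R else 0) \<in> entropy_graph m R"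
proof -
  let ?e = "\<lambda>j. if j = i then 1 else 0 :: real"
  have "?e \<in> prob_simplex {..<m}" using assms by (simp add: prob_simplex_def)
  moreover have "shannon_entropy {..<m} ?e = 0"
    unfolding shannon_entropy_def by (subst sum.neutral) auto
  then have "(\<lambda>j. if j = i then R else 0) = entropy_point m R ?e"
    using assms by (auto simp: entropy_point_def)
  ultimately show ?thesis unfolding entropy_graph_def by blast
qed

lemma barycenter_in_Co_entropy_graph:
  assumes "0 < m"
  shows "(\<lambda>j. if j < m then R / m else 0) \<in> Co (entropy_graph m R)"
proof -
  have "(\<Sum>i<m. 1 / m * (if j = i then R else 0)) = (\<Sum>i<m. if j = i then R / m else 0)" for j
    by (intro sum.cong) auto
  then have "(\<Sum>i<m. 1 / m * (if j = i then R else 0)) = (if j < m then R / m else 0)" for j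
    by simp
  then show ?thesis
    unfolding Co_def using assms vertex_in_entropy_graph
    by (intro CollectI exI[of _ m] exI[of _ "\<lambda>_. 1 / m"] exI[of _ "\<lambda>i j. if j = i then R else 0"])
      auto
qed

lemma l1norm_entropy_point_le:
  assumes "0 \<le> R" "p \<in> prob_simplex {..<m}"
  shows "l1norm (Suc m) (entropy_point m R p) \<le> R + log 2 m"
proof -
  have "(\<Sum>i<m. \<bar>R * p i\<bar>) = (\<Sum>i<m. R * p i)"
    using assms by (intro sum.cong) (auto simp: prob_simplex_def)
  also have "\<dots> = R" using assms unfolding prob_simplex_def by (simp flip: sum_distrib_left)
  finally show ?thesis
    using shannon_entropy_bits_bounds[OF assms(2)] by (simp add: l1norm_def entropy_point_def)
qed

lemma l1dist_entropy_point_le: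
  assumes "0 \<le> R" "p \<in> prob_simplex {..<m}" "q \<in> prob_simplex {..<m}"
  shows "l1dist (Suc m) (entropy_point m R p) (entropy_point m R q) \<le> 2 * R + log 2 m"
proof -
  have "(\<Sum>i<m. \<bar>R * p i - R * q i\<bar>) \<le> (\<Sum>i<m. R * p i + R * q i)"
  proof (intro sum_mono)
    fix i assume "i \<in> {..<m}"
    then have "0 \<le> R * p i" "0 \<le> R * q i" using assms by (auto simp: prob_simplex_def)
    then show "\<bar>R * p i - R * q i\<bar> \<le> R * p i + R * q i" by linarith
  qed
  also have "\<dots> = 2 * R"
    using assms unfolding prob_simplex_def by (simp add: sum.distrib flip: sum_distrib_left)
  finally show ?thesis
    using shannon_entropy_bits_bounds[OF assms(2)] shannon_entropy_bits_bounds[OF assms(3)]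
    by (simp add: l1dist_Suc entropy_point_def)
qed

lemma l1dist_mix_entropy_point_le:
  assumes "p \<in> prob_simplex {..<m}" "q \<in> prob_simplex {..<m}" "0 \<le> t" "t \<le> 1"
  shows "l1dist (Suc m) (\<lambda>j. t * entropy_point m R p j + (1 - t) * entropy_point m R q j)
           (entropy_point m R (\<lambda>i. t * p i + (1 - t) * q i)) \<le> 1"
proof -
  let ?H = "shannon_entropy {..<m}"
  have "\<bar>t * ?H p + (1 - t) * ?H q - ?H (\<lambda>i. t * p i + (1 - t) * q i)\<bar> \<le> ln 2"
    using shannon_entropy_concave[OF assms] shannon_entropy_mix_le[OF assms] by linarith
  then have "\<bar>t * ?H p / ln 2 + (1 - t) * ?H q / ln 2 - ?H (\<lambda>i. t * p i + (1 - t) * q i) / ln 2\<bar> \<le> 1"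
    by (simp flip: add_divide_distrib diff_divide_distrib)
  moreover have "(\<Sum>i<m. \<bar>t * (R * p i) + (1 - t) * (R * q i) - R * (t * p i + (1 - t) * q i)\<bar>) = 0"
    by (intro sum.neutral) (simp add: algebra_simps)
  ultimately show ?thesis by (simp add: l1dist_Suc entropy_point_def)
qed

lemma entropy_graph_approx_convex: "approx_convex (Suc m) (entropy_graph m R)"
  unfolding approx_convex_def
proof (intro ballI allI impI)
  fix a b and t :: real
  assume "a \<in> entropy_graph m R" "b \<in> entropy_graph m R" and t: "0 \<le> t \<and> t \<le> 1"
  then obtain p q where pq: "p \<in> prob_simplex {..<m}" "q \<in> prob_simplex {..<m}"
    and ab: "a = entropy_point m R p" "b = entropy_point m R q"
    unfolding entropy_graph_def by blast
  let ?r = "\<lambda>i. t * p i + (1 - t) * q i"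
  have "entropy_point m R ?r \<in> entropy_graph m R"
    unfolding entropy_graph_def using prob_simplex_mix[OF pq] t by auto
  then have "l1setdist (Suc m) (\<lambda>i. t * a i + (1 - t) * b i) (entropy_graph m R)
               \<le> l1dist (Suc m) (\<lambda>i. t * a i + (1 - t) * b i) (entropy_point m R ?r)"
    by (rule l1setdist_le)
  also have "\<dots> \<le> 1" unfolding ab using l1dist_mix_entropy_point_le[OF pq] t by blast
  finally show "l1setdist (Suc m) (\<lambda>i. t * a i + (1 - t) * b i) (entropy_graph m R) \<le> 1" .
qed

lemma l1dist_barycenter_entropy_point_ge:
  assumes "0 < m" "2 * log 2 m + 3 \<le> R" "p \<in> prob_simplex {..<m}"
  shows "log 2 m \<le> l1dist (Suc m) (\<lambda>j. if j < m then R / m else 0) (entropy_point m R p)"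
proof -
  let ?H = "shannon_entropy {..<m} p"
  define S where "S = (\<Sum>i<m. \<bar>p i - 1 / m\<bar>)"
  have "0 \<le> S" unfolding S_def by (intro sum_nonneg) auto
  have "0 \<le> log 2 m" using assms(1) by simp
  then have "0 \<le> R" using assms(2) by linarith
  have "2 * ln m + 2 \<le> 2 * ln m + 3 * ln 2" using ln2_ge_two_thirds by simp
  also have "\<dots> = (2 * log 2 m + 3) * ln 2" by (simp add: log_def algebra_simps)
  also have "\<dots> \<le> R * ln 2" using assms(2) by simp
  finally have "(2 * ln m + 2) * S \<le> R * ln 2 * S" using \<open>0 \<le> S\<close> by (rule mult_right_mono)
  then have "ln m - ?H \<le> R * ln 2 * S"
    using ln_card_minus_shannon_entropy_le[OF finite_lessThan assms(3)]
    unfolding card_lessThan S_def[symmetric] by linarith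
  then have "ln m / ln 2 \<le> (R * ln 2 * S + ?H) / ln 2" by (simp add: divide_right_mono)
  then have "log 2 m \<le> R * S + ?H / ln 2" by (simp add: log_def add_divide_distrib)
  also have "R * S = (\<Sum>i<m. \<bar>R / m - R * p i\<bar>)"
    unfolding S_def sum_distrib_left
  proof (intro sum.cong refl)
    fix i
    have "R * \<bar>p i - 1 / m\<bar> = \<bar>R * (p i - 1 / m)\<bar>" using \<open>0 \<le> R\<close> by (simp add: abs_mult)
    also have "R * (p i - 1 / m) = R * p i - R / m" by (simp add: right_diff_distrib)
    finally show "R * \<bar>p i - 1 / m\<bar> = \<bar>R / m - R * p i\<bar>" by (simp add: abs_minus_commute)
  qed
  finally show ?thesis
    using shannon_entropy_nonneg[OF finite_lessThan assms(3)] by (simp add: l1dist_Suc entropy_point_def)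
qed

lemma hausd_entropy_graph_ge:
  assumes "0 < m" "2 * log 2 m + 3 \<le> R"
  shows "log 2 m \<le> hausd (Suc m) (entropy_graph m R) (Co (entropy_graph m R))"
proof -
  let ?w = "\<lambda>j. if j < m then R / m else 0"
  have "0 \<le> log 2 m" using assms(1) by simp
  then have "0 \<le> R" using assms(2) by linarith
  have "log 2 m \<le> l1setdist (Suc m) ?w (entropy_graph m R)"
  proof (rule l1setdist_ge)
    show "entropy_graph m R \<noteq> {}" using vertex_in_entropy_graph[OF assms(1)] by blast
    fix a assume "a \<in> entropy_graph m R"
    then obtain p where "p \<in> prob_simplex {..<m}" "a = entropy_point m R p"
      unfolding entropy_graph_def by blast
    then show "log 2 m \<le> l1dist (Suc m) ?w a"
      using l1dist_barycenter_entropy_point_ge[OF assms] by simp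
  qed
  also have "\<dots> \<le> hausd (Suc m) (entropy_graph m R) (Co (entropy_graph m R))"
  proof (rule l1setdist_le_hausd_Co)
    show "(\<lambda>j. if j = 0 then R else 0) \<in> entropy_graph m R"
      using vertex_in_entropy_graph[OF assms(1)] .
    show "?w \<in> Co (entropy_graph m R)" using barycenter_in_Co_entropy_graph[OF assms(1)] .
    fix a assume "a \<in> entropy_graph m R"
    then show "l1norm (Suc m) a \<le> R + log 2 m"
      using l1norm_entropy_point_le[OF \<open>0 \<le> R\<close>] unfolding entropy_graph_def by blast
  qed
  finally show ?thesis .
qed

lemma l1dist_entropy_graph_le:
  assumes "0 \<le> R" "a \<in> entropy_graph m R" "b \<in> entropy_graph m R"
  shows "l1dist (Suc m) a b \<le> 2 * R + log 2 m"
  using assms l1dist_entropy_point_le unfolding entropy_graph_def by blast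

lemma eventually_log2_pred_ge:
  fixes \<epsilon> :: real
  assumes "0 < \<epsilon>"
  shows "\<forall>\<^sub>F n in sequentially. log 2 (real n) - \<epsilon> \<le> log 2 (real (n - 1))"
proof -
  have "((\<lambda>n::nat. log 2 (real n) - log 2 (real (n - 1))) \<longlongrightarrow> 0) sequentially"
    by real_asymp
  from order_tendstoD(2)[OF this assms] show ?thesis by eventually_elim simp
qed

lemma eventually_le_mult_log2:
  fixes c C :: real
  assumes "0 < c"
  shows "\<forall>\<^sub>F n in sequentially. C \<le> c * log 2 (real n)"
proof -
  have "filterlim (\<lambda>n::nat. c * log 2 (real n)) at_top sequentially"
    using assms by real_asymp
  then show ?thesis by (simp add: filterlim_at_top)
qed

theorem proposition4p3:
  fixes \<epsilon> :: real
  assumes "0 < \<epsilon>" and "\<epsilon> < 2"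
  shows "\<forall>\<^sub>F n in sequentially. \<exists>A. A \<subseteq> l1space n \<and> A \<noteq> {} \<and>
            bdd_above {l1dist n x y | x y. x \<in> A \<and> y \<in> A} \<and>
            approx_convex n A \<and>
            hausd n A (Co A) \<ge> log 2 (real n) - \<epsilon> \<and>
            l1diam n A \<le> (8 / \<epsilon> + 1) * log 2 (real n)"
proof -
  have "0 < 8 / \<epsilon> - 4" using assms by (simp add: field_simps)
  have "\<forall>\<^sub>F n in sequentially. log 2 (real n) - \<epsilon> \<le> log 2 (real (n - 1))"
    using assms(1) by (rule eventually_log2_pred_ge)
  moreover have "\<forall>\<^sub>F n in sequentially. 6 \<le> (8 / \<epsilon> - 4) * log 2 (real n)"
    using \<open>0 < 8 / \<epsilon> - 4\<close> by (rule eventually_le_mult_log2)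
  moreover have "\<forall>\<^sub>F n in sequentially. 2 \<le> n" by (rule eventually_ge_at_top)
  ultimately show ?thesis
  proof eventually_elim
    case (elim n)
    define m where "m = n - 1"
    define R where "R = 2 * log 2 m + 3"
    have n: "n = Suc m" "0 < m" using elim(3) by (auto simp: m_def)
    have "0 \<le> log 2 m" "log 2 m \<le> log 2 n" using n by auto
    then have "0 \<le> R" unfolding R_def by simp
    let ?A = "entropy_graph m R"
    show ?case
    proof (intro exI[of _ ?A] conjI)
      show "?A \<subseteq> l1space n" "approx_convex n ?A"
        unfolding n(1) by (rule entropy_graph_subset_l1space entropy_graph_approx_convex)+
      show "?A \<noteq> {}" using vertex_in_entropy_graph[OF n(2)] by blast
      show "bdd_above {l1dist n x y | x y. x \<in> ?A \<and> y \<in> ?A}"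
        unfolding n(1) using l1dist_entropy_graph_le[OF \<open>0 \<le> R\<close>]
        by (intro bdd_aboveI[of _ "2 * R + log 2 m"]) blast
      have "log 2 m \<le> hausd n ?A (Co ?A)"
        unfolding n(1) by (rule hausd_entropy_graph_ge[OF n(2)]) (simp add: R_def)
      then show "log 2 n - \<epsilon> \<le> hausd n ?A (Co ?A)" using elim(1) by (simp add: m_def)
      have "l1diam n ?A \<le> 2 * R + log 2 m"
        unfolding n(1) using \<open>?A \<noteq> {}\<close> l1dist_entropy_graph_le[OF \<open>0 \<le> R\<close>] by (rule l1diam_le)
      also have "\<dots> \<le> (8 / \<epsilon> + 1) * log 2 n"
        using elim(2) \<open>log 2 m \<le> log 2 n\<close> unfolding R_def by (simp add: algebra_simps)
      finally show "l1diam n ?A \<le> (8 / \<epsilon> + 1) * log 2 n" .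
    qed
  qed
qed

end
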